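(* The function $(S,h,h')\mapsto P(S,h|h')$ is piecewise continuous on $[0,\infty)\times[-1,1]\times[-1,1]$, and: 1) $P(S,h|h')=P(S,h'|h)=P(S,-h|-h')$ for a.e. $h,h'\in[-1,1]$ and all $S\ge0$; moreover $\int_0^\infty\int_{-1}^1P(S,h|h')\,dS\,dh=1$ for each $h'\in[-1,1]$ and $\int_0^\infty\int_{-1}^1P(S,h|h')\,dS\,dh'=1$ for each $h\in[-1,1]$. 2) $0\le P(S,h|h')\le\frac{6}{\pi^2S}\mathbf 1_{1+h'<2/S}$ for a.e. $h,h'\in(-1,1)$ with $|h'|\le h$ and all $S\ge4$; and $\int_{-1}^1\int_{-1}^1P(S,h|h')\,dh\,dh'\le\frac{48}{\pi^2S^3}$ for all $S\ge4$.
   Context: $P(S,h|h')$ is defined for $S\ge0$, $h,h'\in[-1,1]$ by $$P(S,h|h')=\frac{3}{\pi^2 S\eta}\Big((S\eta)\wedge(1-S)_+ +(\eta S-|1-S|)_+ +\big((S-\tfrac12S\eta)\wedge(1+\tfrac12S\eta)-(\tfrac12S+\tfrac12S\zeta)\vee1\big)_+ +\big((S-\tfrac12S\eta)\wedge1-(\tfrac12S+\tfrac12S\zeta)\vee(1-\tfrac12S\eta)\big)_+\Big),$$ with $\zeta=\tfrac12|h+h'|$, $\eta=\tfrac12|h-h'|$, $a\wedge b=\min(a,b)$, $a\vee b=\max(a,b)$, $z_+=\max(z,0)$. For $|h'|\le h<1$ this equals $\frac{3}{\pi^2}\big(1\wedge\frac{1}{h-h'}(\frac2S-(1+h'))_+\big)$.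 *)

theory Defs
  imports "HOL-Analysis.Analysis"
begin

definition pos_part :: "real \<Rightarrow> real" where
  "pos_part z = max z 0"

text \<open>The kernel P(S,h|h'), written Pk S h h', following the paper's formula literally
  (min = wedge, max = vee, pos_part = (_)_+). Division by zero follows Isabelle's convention.\<close>
definition Pk :: "real \<Rightarrow> real \<Rightarrow> real \<Rightarrow> real" where
  "Pk S h h' =
    (let \<zeta> = \<bar>h + h'\<bar> / 2; \<eta> = \<bar>h - h'\<bar> / 2 in
     3 / (pi^2 * S * \<eta>) *
      ( min (S * \<eta>) (pos_part (1 - S))
      + pos_part (\<eta> * S - \<bar>1 - S\<bar>)
      + pos_part (min (S - S * \<eta> / 2) (1 + S * \<eta> / 2) - max (S / 2 + S * \<zeta> / 2) 1)
      + pos_part (min (S - S * \<eta> / 2) 1 - max (S / 2 + S * \<zeta> / 2) (1 - S * \<eta> / 2))))"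

definition piecewise_continuous_on ::
  "('a::euclidean_space) set \<Rightarrow> ('a \<Rightarrow> real) \<Rightarrow> bool" where
  "piecewise_continuous_on D f \<longleftrightarrow>
     (\<exists>\<C>. finite \<C> \<and> D \<subseteq> \<Union>\<C> \<and>
        (\<forall>C\<in>\<C>. closed C \<and> negligible (frontier C) \<and> continuous_on (D \<inter> interior C) f))"

end

theory Submission
  imports Defs "HOL-Real_Asymp.Real_Asymp"
begin

text \<open>
  For \<open>S > 0\<close> the four-term bracket in the definition of \<open>Pk\<close> collapses to
  \<open>(1 - S m/2)\<^sub>+ - (1 - S M/2)\<^sub>+\<close> with \<open>m = 1 + \<zeta> - \<eta>\<close> and \<open>M = 1 + \<zeta> + \<eta>\<close>; this gives
  symmetry, positivity and continuity away from \<open>S = 0\<close> and \<open>h = h'\<close>.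
  The integral over \<open>S\<close> is then a Frullani integral, equal to \<open>3 ln (M / m) / (pi\<^sup>2 \<eta>)\<close>.
  On either side of \<open>h = -h'\<close> this is an elementary function of \<open>h\<close> with a dilogarithm as
  antiderivative, and the boundary values add up to \<open>pi\<^sup>2 / 3\<close> by Landen's identity
  \<open>Li\<^sub>2 (1 / (1 + p)) - Li\<^sub>2 (-p) = pi\<^sup>2 / 6 - ln\<^sup>2 (1 + p) / 2 + ln p ln (1 + p)\<close>
  with \<open>p = (1 - \<bar>h'\<bar>) / (1 + \<bar>h'\<bar>)\<close>; Tonelli's theorem then gives total mass 1.
  For \<open>S \<ge> 4\<close> only the \<open>m\<close>-term survives. It is at most \<open>2 \<eta>\<close> and vanishes unless
  \<open>m < 2 / S\<close>, which confines \<open>(h, h')\<close> to two corner squares of side \<open>2 / S\<close>;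
  hence the bound \<open>48 / (pi\<^sup>2 S\<^sup>3)\<close>.
\<close>

section \<open>The dilogarithm\<close>

text \<open>The \<open>n = 0\<close> term vanishes because \<open>1 / 0 = 0\<close>.\<close>

definition dilog :: "real \<Rightarrow> real" where
  "dilog x = (\<Sum>n. x ^ n / (real n)\<^sup>2)"

lemma inverse_squares_sums_from_0: "(\<lambda>n. 1 / (real n)\<^sup>2) sums (pi\<^sup>2 / 6)"
  using sums_Suc_iff[of "\<lambda>n. 1 / (real n)\<^sup>2"] inverse_squares_sums
  by (simp add: add.commute)

lemma dilog_0 [simp]: "dilog 0 = 0"
proof -
  have "(\<lambda>n. 0 ^ n / (real n)\<^sup>2) = (\<lambda>n. 0 :: real)"
    by (auto simp: fun_eq_iff power_0_left)
  then show ?thesis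
    by (simp add: dilog_def)
qed

lemma dilog_1: "dilog 1 = pi\<^sup>2 / 6"
  using inverse_squares_sums_from_0 by (simp add: dilog_def sums_iff)

lemma continuous_on_dilog: "continuous_on {-1..1} dilog"
proof -
  have lim: "uniform_limit {-1..1} (\<lambda>n x. \<Sum>i<n. x ^ i / (real i)\<^sup>2) dilog sequentially"
    unfolding dilog_def
    by (rule Weierstrass_m_test[OF _ sums_summable[OF inverse_squares_sums_from_0]])
       (auto intro!: divide_right_mono power_le_one simp: power_abs)
  show ?thesis
    by (rule uniform_limit_theorem[OF _ lim]) (auto simp: divide_inverse intro!: always_eventually continuous_intros)
qed

lemma dilog_has_real_derivative_at:
  assumes "\<bar>x\<bar> < 1" "x \<noteq> 0"
  shows "(dilog has_real_derivative - ln (1 - x) / x) (at x)"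
proof -
  have summable: "summable (\<lambda>n. 1 / (real n)\<^sup>2 * y ^ n)" if "\<bar>y\<bar> \<le> 1" for y
    by (rule summable_comparison_test[OF _ sums_summable[OF inverse_squares_sums_from_0]])
       (use that in \<open>auto intro!: divide_right_mono power_le_one simp: power_abs\<close>)
  have "((\<lambda>y. \<Sum>n. 1 / (real n)\<^sup>2 * y ^ n) has_real_derivative
          (\<Sum>n. diffs (\<lambda>n. 1 / (real n)\<^sup>2) n * x ^ n)) (at x)"
    by (rule termdiffs_strong'[where K = 1]) (use assms summable in auto)
  moreover have "diffs (\<lambda>n. 1 / (real n)\<^sup>2) = (\<lambda>n. 1 / real (Suc n))"
    by (auto simp: diffs_def power2_eq_square simp del: of_nat_Suc)
  moreover have "(\<lambda>n. 1 / real (Suc n) * x ^ n) sums (- ln (1 - x) / x)"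
  proof -
    have "(\<lambda>n. x ^ n / real n) sums (- ln (1 - x))"
      using ln_series'[of "-x"] sums_minus assms by fastforce
    then have "(\<lambda>n. x ^ Suc n / real (Suc n)) sums (- ln (1 - x))"
      by (subst sums_Suc_iff) simp
    then have "(\<lambda>n. x ^ Suc n / real (Suc n) / x) sums (- ln (1 - x) / x)"
      by (rule sums_divide)
    then show ?thesis
      using assms by (simp add: field_simps del: of_nat_Suc)
  qed
  moreover have "dilog = (\<lambda>y. \<Sum>n. 1 / (real n)\<^sup>2 * y ^ n)"
    by (simp add: dilog_def fun_eq_iff)
  ultimately show ?thesis
    by (simp add: sums_iff)
qed

lemma dilog_has_real_derivative:
  assumes "(g has_real_derivative g') (at x)" "\<bar>g x\<bar> < 1" "g x \<noteq> 0"
    "D = - ln (1 - g x) / g x * g'"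
  shows "((\<lambda>y. dilog (g y)) has_real_derivative D) (at x)"
  using DERIV_chain2[OF dilog_has_real_derivative_at assms(1)] assms(2-4) by simp

lemma has_real_derivative_Landen:
  assumes q: "0 < q" "q < 1"
  shows "((\<lambda>q. dilog (1 / (1 + q)) - dilog (- q) + ((ln (1 + q))\<^sup>2 / 2 - ln (1 + q) * ln q))
    has_real_derivative 0) (at q)"
proof -
  have g: "((\<lambda>q. 1 / (1 + q)) has_real_derivative - 1 / (1 + q)\<^sup>2) (at q)"
    using q by (auto intro!: derivative_eq_intros simp: power2_eq_square)
  have "1 - 1 / (1 + q) = q / (1 + q)"
    using q by (simp add: field_simps)
  then have "ln (1 - 1 / (1 + q)) = ln q - ln (1 + q)"
    using q by (simp add: ln_div)
  then have "(ln q - ln (1 + q)) / (1 + q) = - ln (1 - 1 / (1 + q)) / (1 / (1 + q)) * (- 1 / (1 + q)\<^sup>2)"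
    using q by (simp add: power2_eq_square divide_simps)
  moreover have "\<bar>1 / (1 + q)\<bar> < 1" "1 / (1 + q) \<noteq> 0"
    using q by (simp_all add: field_simps)
  ultimately have d1: "((\<lambda>q. dilog (1 / (1 + q))) has_real_derivative (ln q - ln (1 + q)) / (1 + q)) (at q)"
    by (intro dilog_has_real_derivative[OF g])
  have d2: "((\<lambda>q. dilog (- q)) has_real_derivative - ln (1 + q) / q) (at q)"
    using q by (auto intro!: derivative_eq_intros dilog_has_real_derivative)
  have d3: "((\<lambda>q. (ln (1 + q))\<^sup>2 / 2 - ln (1 + q) * ln q) has_real_derivative
      ln (1 + q) / (1 + q) - (ln q / (1 + q) + ln (1 + q) / q)) (at q)"
    using q by (auto intro!: derivative_eq_intros simp: field_simps)
  show ?thesis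
    using DERIV_add[OF DERIV_diff[OF d1 d2] d3] by (simp add: diff_divide_distrib algebra_simps)
qed

lemma dilog_Landen:
  assumes "0 < p" "p \<le> 1"
  shows "dilog (1 / (1 + p)) - dilog (- p) = pi\<^sup>2 / 6 - (ln (1 + p))\<^sup>2 / 2 + ln (1 + p) * ln p"
proof -
  define \<phi> where "\<phi> = (\<lambda>q. dilog (1 / (1 + q)) - dilog (- q) + ((ln (1 + q))\<^sup>2 / 2 - ln (1 + q) * ln q))"
  have cont: "continuous_on {a..b} \<phi>" if "0 < a" "b \<le> 1" for a b
    unfolding \<phi>_def using that
    by (intro continuous_intros continuous_on_compose2[OF continuous_on_dilog]) (auto simp: field_simps)
  have const: "\<phi> q = \<phi> p" if "0 < q" "q \<le> p" for q
    using DERIV_isconst_end[of q p \<phi>] that assms cont has_real_derivative_Landen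
    by (cases "q = p") (auto simp: \<phi>_def)
  have "(\<phi> \<longlongrightarrow> \<phi> p) (at_right 0)"
    by (rule Lim_transform_eventually[OF tendsto_const])
       (use assms in \<open>auto simp: eventually_at_right_field intro!: exI[of _ p] const[symmetric]\<close>)
  moreover have "(\<phi> \<longlongrightarrow> pi\<^sup>2 / 6) (at_right 0)"
  proof -
    have "((\<lambda>q. dilog (1 / (1 + q))) \<longlongrightarrow> dilog 1) (at_right 0)"
      by (rule continuous_on_tendsto_compose[OF continuous_on_dilog])
         (auto intro!: tendsto_eq_intros exI[of _ 1] simp: eventually_at_right_field field_simps)
    moreover have "((\<lambda>q. dilog (- q)) \<longlongrightarrow> dilog 0) (at_right 0)"
      by (rule continuous_on_tendsto_compose[OF continuous_on_dilog])
         (auto intro!: tendsto_eq_intros exI[of _ 1] simp: eventually_at_right_field)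
    moreover have "((\<lambda>q::real. (ln (1 + q))\<^sup>2 / 2 - ln (1 + q) * ln q) \<longlongrightarrow> 0) (at_right 0)"
      by real_asymp
    ultimately have "(\<phi> \<longlongrightarrow> dilog 1 - dilog 0 + 0) (at_right 0)"
      unfolding \<phi>_def by (intro tendsto_add tendsto_diff)
    then show ?thesis
      by (simp add: dilog_1)
  qed
  ultimately have "\<phi> p = pi\<^sup>2 / 6"
    by (rule tendsto_unique[OF trivial_limit_at_right_real])
  then show ?thesis
    by (simp add: \<phi>_def)
qed

lemma dilog_Landen_reparametrized:
  assumes a: "0 \<le> a" "a < 1"
  shows "(ln (2 / (1 - a)))\<^sup>2 + 2 * dilog ((1 + a) / 2) - (ln ((1 + a) / (1 - a)))\<^sup>2
    - 2 * dilog ((a - 1) / (1 + a)) = pi\<^sup>2 / 3"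
proof -
  define p where "p = (1 - a) / (1 + a)"
  have p: "0 < p" "p \<le> 1"
    using a by (auto simp: p_def field_simps)
  have "a * a < 1"
    using mult_left_le_one_le[of a a] a by linarith
  then have p_eqs: "2 / (1 - a) = (1 + p) / p" "(1 + a) / 2 = 1 / (1 + p)" "(1 + a) / (1 - a) = 1 / p"
    "(a - 1) / (1 + a) = - p"
    using a by (auto simp: p_def field_simps)
  have "(ln (2 / (1 - a)))\<^sup>2 + 2 * dilog ((1 + a) / 2) - (ln ((1 + a) / (1 - a)))\<^sup>2
      - 2 * dilog ((a - 1) / (1 + a))
    = (ln ((1 + p) / p))\<^sup>2 - (ln (1 / p))\<^sup>2 + 2 * (dilog (1 / (1 + p)) - dilog (- p))"
    unfolding p_eqs by simp
  also have "\<dots> = (ln (1 + p))\<^sup>2 - 2 * ln (1 + p) * ln p + 2 * (dilog (1 / (1 + p)) - dilog (- p))"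
    using p by (simp add: ln_div power2_eq_square algebra_simps)
  also have "\<dots> = pi\<^sup>2 / 3"
    unfolding dilog_Landen[OF p] by (simp add: algebra_simps)
  finally show ?thesis .
qed

section \<open>Frullani integrals and iterated integrals\<close>

lemma has_integral_inverse_minus_const:
  fixes c d m :: real
  assumes "0 < c" "c \<le> d"
  shows "((\<lambda>S. 1 / S - m) has_integral ln (d / c) - m * (d - c)) {c..d}"
proof -
  have "((\<lambda>S. 1 / S - m) has_integral (ln d - m * d) - (ln c - m * c)) {c..d}"
    by (rule fundamental_theorem_of_calculus[OF assms(2)])
       (use assms in \<open>auto intro!: derivative_eq_intros simp: has_real_derivative_iff_has_vector_derivative[symmetric]\<close>)
  then show ?thesis
    by (rule has_integral_eq_rhs) (use assms in \<open>simp add: ln_div algebra_simps\<close>)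
qed

lemma pos_part_Frullani_integrand_eq:
  fixes m M S :: real
  assumes "0 < m" "m \<le> M" "0 < S"
  shows "(pos_part (1 - m * S) - pos_part (1 - M * S)) / S =
    (if S \<le> 1 / M then M - m else if S \<le> 1 / m then 1 / S - m else 0)"
proof -
  have mM: "m * S \<le> M * S"
    using assms by (simp add: mult_right_mono)
  have iff: "S \<le> 1 / M \<longleftrightarrow> M * S \<le> 1" "S \<le> 1 / m \<longleftrightarrow> m * S \<le> 1"
    using assms by (simp_all add: field_simps)
  consider "M * S \<le> 1" | "\<not> M * S \<le> 1" "m * S \<le> 1" | "\<not> m * S \<le> 1"
    by linarith
  then show ?thesis
  proof cases
    case 1
    then have "m * S \<le> 1"
      using mM by linarith
    with 1 show ?thesis
      using assms by (simp add: iff pos_part_def field_simps)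
  next
    case 2
    then show ?thesis
      using assms by (simp add: iff pos_part_def field_simps)
  next
    case 3
    then have "\<not> M * S \<le> 1"
      using mM by linarith
    with 3 show ?thesis
      by (simp add: iff pos_part_def)
  qed
qed

lemma has_integral_pos_part_Frullani:
  fixes m M :: real
  assumes "0 < m" "m \<le> M"
  shows "((\<lambda>S. (pos_part (1 - m * S) - pos_part (1 - M * S)) / S) has_integral ln (M / m)) {0..}"
proof -
  define f where "f S = (pos_part (1 - m * S) - pos_part (1 - M * S)) / S" for S
  have M: "0 < 1 / M" "1 / M \<le> 1 / m"
    using assms by (auto simp: field_simps)
  have pos: "0 < S" if "1 / M \<le> S" for S
    using M(1) that by linarith
  have f_eq: "f S = (if S \<le> 1 / M then M - m else if S \<le> 1 / m then 1 / S - m else 0)" if "0 < S" for S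
    unfolding f_def using assms that by (rule pos_part_Frullani_integrand_eq)
  have "((\<lambda>S. M - m) has_integral (M - m) * (1 / M)) {0..1 / M}"
    using has_integral_const_real[of "M - m" 0 "1 / M"] M by simp
  then have part1: "(f has_integral (M - m) * (1 / M)) {0..1 / M}"
    by (rule has_integral_spike_finite[of "{0}", rotated 2]) (auto simp: f_eq)
  from has_integral_inverse_minus_const[OF M, of m]
  have part2: "(f has_integral ln ((1 / m) / (1 / M)) - m * (1 / m - 1 / M)) {1 / M..1 / m}"
    by (rule has_integral_spike_finite[of "{1 / M}", rotated 2]) (use M in \<open>auto simp: f_eq pos\<close>)
  have "(f has_integral (M - m) * (1 / M) + (ln ((1 / m) / (1 / M)) - m * (1 / m - 1 / M))) {0..1 / m}"
    by (rule has_integral_combine[OF _ _ part1 part2]) (use M in auto)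
  then have "(f has_integral ln (M / m)) {0..1 / m}"
    by (rule has_integral_eq_rhs) (use assms in \<open>simp add: right_diff_distrib diff_divide_distrib\<close>)
  then have restricted: "((\<lambda>S. if S \<in> {0..1 / m} then f S else 0) has_integral ln (M / m)) {0..}"
    using M by (subst has_integral_restrict) auto
  have zero: "f S = 0" if "1 / m < S" for S
  proof -
    have "1 / M < S"
      using that M by linarith
    then show ?thesis
      using that f_eq[OF pos] by simp
  qed
  from restricted show ?thesis
    unfolding f_def[symmetric] by (rule has_integral_eq[rotated]) (use zero in auto)
qed

lemma has_integral_nn_integral_on:
  fixes f :: "'a::euclidean_space \<Rightarrow> real"
  assumes [measurable]: "f \<in> borel_measurable borel" "D \<in> sets borel"
    and nonneg: "\<And>x. x \<in> D \<Longrightarrow> 0 \<le> f x"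
    and "(\<integral>\<^sup>+x. ennreal (indicator D x * f x) \<partial>lborel) = ennreal r" "0 \<le> r"
  shows "(f has_integral r) D"
proof -
  have "((\<lambda>x. indicator D x * f x) has_integral r) UNIV"
    using assms by (intro nn_integral_has_integral) (auto simp: indicator_def)
  then have "((\<lambda>x. if x \<in> D then f x else 0) has_integral r) UNIV"
    by (rule has_integral_eq[rotated]) (simp add: indicator_def)
  then show ?thesis
    unfolding has_integral_restrict_UNIV .
qed

lemma has_integral_Times_iterated_nonneg:
  fixes f :: "real \<times> real \<Rightarrow> real"
  assumes [measurable]: "f \<in> borel_measurable borel" "A \<in> sets borel" "B \<in> sets borel"
    and f_nonneg: "\<And>x y. x \<in> A \<Longrightarrow> y \<in> B \<Longrightarrow> 0 \<le> f (x, y)"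
    and g_nonneg: "\<And>y. y \<in> B \<Longrightarrow> 0 \<le> g y"
    and inner: "AE y in lborel. y \<in> B \<longrightarrow> ((\<lambda>x. f (x, y)) has_integral g y) A"
    and outer: "(g has_integral I) B"
  shows "(f has_integral I) (A \<times> B)"
proof (rule has_integral_nn_integral_on)
  show "f \<in> borel_measurable borel"
    by fact
  show "A \<times> B \<in> sets borel"
    by (simp add: borel_prod[symmetric])
  show "0 \<le> f z" if "z \<in> A \<times> B" for z
    using that f_nonneg by auto
  show "0 \<le> I"
    using outer g_nonneg by (rule has_integral_nonneg)
  have "(\<lambda>z. ennreal (indicator (A \<times> B) z * f z)) \<in> borel_measurable (lborel \<Otimes>\<^sub>M lborel)"
    unfolding lborel_prod using \<open>A \<times> B \<in> sets borel\<close> by measurable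
  from lborel_pair.nn_integral_snd[OF this]
  have "(\<integral>\<^sup>+z. ennreal (indicator (A \<times> B) z * f z) \<partial>lborel)
      = (\<integral>\<^sup>+y. \<integral>\<^sup>+x. ennreal (indicator (A \<times> B) (x, y) * f (x, y)) \<partial>lborel \<partial>lborel)"
    by (simp only: lborel_prod)
  also have "\<dots> = (\<integral>\<^sup>+y. ennreal (indicator B y * g y) \<partial>lborel)"
  proof (rule nn_integral_cong_AE)
    show "AE y in lborel. (\<integral>\<^sup>+x. ennreal (indicator (A \<times> B) (x, y) * f (x, y)) \<partial>lborel)
        = ennreal (indicator B y * g y)"
      using inner
    proof eventually_elim
      case (elim y)
      show ?case
      proof (cases "y \<in> B")
        case True
        then show ?thesis
          using nn_integral_has_integral_lebesgue[of A "\<lambda>x. f (x, y)" "g y"] elim f_nonneg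
          by (simp add: indicator_times)
      qed simp
    qed
  qed
  also have "\<dots> = ennreal I"
    using nn_integral_has_integral_lebesgue[OF _ outer] g_nonneg by simp
  finally show "(\<integral>\<^sup>+z. ennreal (indicator (A \<times> B) z * f z) \<partial>lborel) = ennreal I" .
qed

section \<open>Closed form of the kernel\<close>

lemma pos_part_mono: "x \<le> y \<Longrightarrow> pos_part x \<le> pos_part y"
  by (simp add: pos_part_def)

text \<open>In the notation of the paper, \<open>Pk_eta = \<eta>\<close>, \<open>Pk_lo = 1 + \<zeta> - \<eta>\<close> and \<open>Pk_hi = 1 + \<zeta> + \<eta>\<close>.\<close>

definition Pk_eta :: "real \<Rightarrow> real \<Rightarrow> real" where
  "Pk_eta h h' = \<bar>h - h'\<bar> / 2"

definition Pk_lo :: "real \<Rightarrow> real \<Rightarrow> real" where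
  "Pk_lo h h' = 1 + \<bar>h + h'\<bar> / 2 - \<bar>h - h'\<bar> / 2"

definition Pk_hi :: "real \<Rightarrow> real \<Rightarrow> real" where
  "Pk_hi h h' = 1 + \<bar>h + h'\<bar> / 2 + \<bar>h - h'\<bar> / 2"

text \<open>The bracket in the definition of \<open>Pk\<close>, with \<open>E = S \<eta>\<close> and \<open>Z = S \<zeta>\<close>.\<close>

lemma Pk_bracket_eq:
  fixes S E Z :: real
  assumes "0 < S" "0 \<le> E" "0 \<le> Z" "E + Z \<le> S"
  shows "min E (pos_part (1 - S)) + pos_part (E - \<bar>1 - S\<bar>)
      + pos_part (min (S - E / 2) (1 + E / 2) - max (S / 2 + Z / 2) 1)
      + pos_part (min (S - E / 2) 1 - max (S / 2 + Z / 2) (1 - E / 2))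
    = pos_part (1 - (S + Z - E) / 2) - pos_part (1 - (S + Z + E) / 2)"
  using assms unfolding pos_part_def min_def max_def
  by (simp split: if_splits abs_split) (intro conjI impI; simp add: field_simps)

lemma Pk_eq:
  assumes "0 \<le> S" "\<bar>h\<bar> \<le> 1" "\<bar>h'\<bar> \<le> 1"
  shows "Pk S h h' = 3 / (pi\<^sup>2 * Pk_eta h h') *
    ((pos_part (1 - Pk_lo h h' / 2 * S) - pos_part (1 - Pk_hi h h' / 2 * S)) / S)"
proof (cases "S = 0")
  case True
  then show ?thesis
    by (simp add: Pk_def)
next
  case False
  define \<zeta> where "\<zeta> = \<bar>h + h'\<bar> / 2"
  define \<eta> where "\<eta> = Pk_eta h h'"
  have "\<zeta> + \<eta> \<le> 1"
    using assms by (auto simp: \<zeta>_def \<eta>_def Pk_eta_def abs_if field_simps split: if_splits)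
  then have "S * \<eta> + S * \<zeta> \<le> S"
    using assms mult_left_mono[of "\<zeta> + \<eta>" 1 S] by (simp add: algebra_simps)
  then have "min (S * \<eta>) (pos_part (1 - S)) + pos_part (\<eta> * S - \<bar>1 - S\<bar>)
      + pos_part (min (S - S * \<eta> / 2) (1 + S * \<eta> / 2) - max (S / 2 + S * \<zeta> / 2) 1)
      + pos_part (min (S - S * \<eta> / 2) 1 - max (S / 2 + S * \<zeta> / 2) (1 - S * \<eta> / 2))
    = pos_part (1 - (S + S * \<zeta> - S * \<eta>) / 2) - pos_part (1 - (S + S * \<zeta> + S * \<eta>) / 2)"
    using Pk_bracket_eq[of S "S * \<eta>" "S * \<zeta>"] assms False
    by (simp add: \<zeta>_def \<eta>_def Pk_eta_def mult.commute)
  also have "(S + S * \<zeta> - S * \<eta>) / 2 = Pk_lo h h' / 2 * S"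
    by (simp add: \<zeta>_def \<eta>_def Pk_eta_def Pk_lo_def algebra_simps)
  also have "(S + S * \<zeta> + S * \<eta>) / 2 = Pk_hi h h' / 2 * S"
    by (simp add: \<zeta>_def \<eta>_def Pk_eta_def Pk_hi_def algebra_simps)
  finally have "Pk S h h' = 3 / (pi\<^sup>2 * S * \<eta>) *
      (pos_part (1 - Pk_lo h h' / 2 * S) - pos_part (1 - Pk_hi h h' / 2 * S))"
    unfolding Pk_def Let_def Pk_eta_def[symmetric] \<zeta>_def[symmetric] \<eta>_def[symmetric]
    by (simp only:)
  then show ?thesis
    by (simp add: \<eta>_def)
qed

lemma Pk_commute: "Pk S h h' = Pk S h' h"
  by (simp add: Pk_def abs_minus_commute add.commute)

lemma Pk_minus: "Pk S (- h) (- h') = Pk S h h'"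
proof -
  have "\<bar>- h + - h'\<bar> = \<bar>h + h'\<bar>" "\<bar>- h - - h'\<bar> = \<bar>h - h'\<bar>"
    by linarith+
  then show ?thesis
    by (simp add: Pk_def)
qed

lemma Pk_measurable [measurable]:
  assumes [measurable]: "f \<in> borel_measurable M" "g \<in> borel_measurable M" "k \<in> borel_measurable M"
  shows "(\<lambda>x. Pk (f x) (g x) (k x)) \<in> borel_measurable M"
  unfolding Pk_def Let_def pos_part_def by measurable

lemma Pk_lo_le_Pk_hi: "Pk_lo h h' \<le> Pk_hi h h'"
  by (simp add: Pk_lo_def Pk_hi_def)

lemma Pk_hi_ge_1: "1 \<le> Pk_hi h h'"
  by (simp add: Pk_hi_def)

lemma Pk_lo_ge: "1 - Pk_eta h h' \<le> Pk_lo h h'"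
  by (simp add: Pk_lo_def Pk_eta_def)

lemma Pk_lo_pos: "\<bar>h\<bar> < 1 \<Longrightarrow> \<bar>h'\<bar> \<le> 1 \<Longrightarrow> 0 < Pk_lo h h'"
  by (auto simp: Pk_lo_def abs_if field_simps split: if_splits)

lemma Pk_nonneg:
  assumes "0 \<le> S" "\<bar>h\<bar> \<le> 1" "\<bar>h'\<bar> \<le> 1"
  shows "0 \<le> Pk S h h'"
proof -
  have "pos_part (1 - Pk_hi h h' / 2 * S) \<le> pos_part (1 - Pk_lo h h' / 2 * S)"
    using assms Pk_lo_le_Pk_hi[of h h'] by (intro pos_part_mono) (simp add: mult_right_mono)
  then show ?thesis
    using assms by (simp add: Pk_eq Pk_eta_def)
qed

lemma negligible_frontier_halfspace_Int:
  fixes u v :: "'a::euclidean_space"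
  assumes "u \<noteq> 0" "v \<noteq> 0"
  shows "negligible (frontier ({x. 0 \<le> u \<bullet> x} \<inter> {x. 0 \<le> v \<bullet> x}))"
proof (rule negligible_subset[OF _ frontier_Int_subset])
  show "negligible (frontier {x. 0 \<le> u \<bullet> x} \<union> frontier {x. 0 \<le> v \<bullet> x})"
    using assms by (simp add: frontier_halfspace_ge negligible_hyperplane)
qed

lemma continuous_on_Pk:
  "continuous_on {x. 0 < fst x \<and> fst (snd x) \<noteq> snd (snd x)} (\<lambda>(S, h, h'). Pk S h h')"
  unfolding Pk_def Let_def pos_part_def case_prod_unfold
  by (intro continuous_intros) auto

lemma piecewise_continuous_on_Pk:
  "piecewise_continuous_on ({0..} \<times> {-1..1} \<times> {-1..1}) (\<lambda>(S, h, h'). Pk S h h')"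
  unfolding piecewise_continuous_on_def
proof (intro exI conjI ballI)
  define C :: "real \<times> real \<times> real \<Rightarrow> (real \<times> real \<times> real) set"
    where "C v = {x. 0 \<le> (1, 0, 0) \<bullet> x} \<inter> {x. 0 \<le> v \<bullet> x}" for v
  let ?\<C> = "{C (0, -1, 1), C (0, 1, -1)}"
  show "finite ?\<C>"
    by simp
  show "{0..} \<times> {-1..1} \<times> {-1..1} \<subseteq> \<Union> ?\<C>"
    by (auto simp: C_def)
  fix K assume "K \<in> ?\<C>"
  then obtain v where K: "K = C v" and v: "v = (0, -1, 1) \<or> v = (0, 1, -1)"
    by blast
  have nz: "(1, 0, 0) \<noteq> (0 :: real \<times> real \<times> real)" "v \<noteq> 0"
    using v by (auto simp: zero_prod_def)
  show "closed K"
    unfolding K C_def by (intro closed_Int closed_halfspace_ge)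
  show "negligible (frontier K)"
    unfolding K C_def using nz by (rule negligible_frontier_halfspace_Int)
  have "interior K \<subseteq> {x. 0 < fst x \<and> fst (snd x) \<noteq> snd (snd x)}"
    using nz v by (auto simp: K C_def)
  then show "continuous_on ({0..} \<times> {-1..1} \<times> {-1..1} \<inter> interior K) (\<lambda>(S, h, h'). Pk S h h')"
    by (blast intro: continuous_on_subset[OF continuous_on_Pk])
qed

section \<open>The marginals\<close>

definition Pk_log_ratio :: "real \<Rightarrow> real \<Rightarrow> real" where
  "Pk_log_ratio h h' = ln (Pk_hi h h' / Pk_lo h h') / Pk_eta h h'"

lemma Pk_has_integral_S:
  assumes h: "\<bar>h\<bar> < 1" "\<bar>h'\<bar> \<le> 1" "h \<noteq> h'"
  shows "((\<lambda>S. Pk S h h') has_integral 3 / pi\<^sup>2 * Pk_log_ratio h h') {0..}"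
proof -
  define F where "F S = (pos_part (1 - Pk_lo h h' / 2 * S) - pos_part (1 - Pk_hi h h' / 2 * S)) / S" for S
  have "(F has_integral ln ((Pk_hi h h' / 2) / (Pk_lo h h' / 2))) {0..}"
    unfolding F_def using h Pk_lo_pos Pk_lo_le_Pk_hi by (intro has_integral_pos_part_Frullani) auto
  then have "((\<lambda>S. 3 / (pi\<^sup>2 * Pk_eta h h') * F S) has_integral 3 / pi\<^sup>2 * Pk_log_ratio h h') {0..}"
    by (rule has_integral_eq_rhs[OF has_integral_mult_right]) (simp add: Pk_log_ratio_def)
  then show ?thesis
    by (rule has_integral_eq[rotated]) (use h in \<open>auto simp: Pk_eq F_def\<close>)
qed

lemma Pk_log_ratio_nonneg:
  assumes "\<bar>h\<bar> \<le> 1" "\<bar>h'\<bar> \<le> 1"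
  shows "0 \<le> Pk_log_ratio h h'"
proof (cases "Pk_lo h h' = 0")
  case False
  then have "0 < Pk_lo h h'"
    using assms by (auto simp: Pk_lo_def abs_if field_simps split: if_splits)
  then have "1 \<le> Pk_hi h h' / Pk_lo h h'"
    using Pk_lo_le_Pk_hi[of h h'] by simp
  then show ?thesis
    by (simp add: Pk_log_ratio_def Pk_eta_def)
qed (simp add: Pk_log_ratio_def)

lemma Pk_log_ratio_minus: "Pk_log_ratio (- h) (- h') = Pk_log_ratio h h'"
proof -
  have "\<bar>- h + - h'\<bar> = \<bar>h + h'\<bar>" "\<bar>- h - - h'\<bar> = \<bar>h - h'\<bar>"
    by linarith+
  then show ?thesis
    by (simp add: Pk_log_ratio_def Pk_hi_def Pk_lo_def Pk_eta_def)
qed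

lemma Pk_log_ratio_upper:
  assumes "- h' \<le> h" "- 1 < h" "- 1 < h'"
  shows "Pk_log_ratio h h' = 2 * ln ((1 + h) / (1 + h')) / (h - h')"
proof (cases "h' \<le> h")
  case True
  then have "Pk_hi h h' = 1 + h" "Pk_lo h h' = 1 + h'"
    using assms by (simp_all add: Pk_hi_def Pk_lo_def field_simps)
  moreover have "Pk_eta h h' = (h - h') / 2"
    using True by (simp add: Pk_eta_def)
  ultimately show ?thesis
    unfolding Pk_log_ratio_def by (simp only:) simp
next
  case False
  then have "Pk_hi h h' = 1 + h'" "Pk_lo h h' = 1 + h"
    using assms by (simp_all add: Pk_hi_def Pk_lo_def field_simps)
  moreover have "Pk_eta h h' = (h' - h) / 2"
    using False by (simp add: Pk_eta_def)
  moreover have "ln ((1 + h') / (1 + h)) = - ln ((1 + h) / (1 + h'))"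
    using assms by (simp add: ln_div)
  ultimately show ?thesis
    unfolding Pk_log_ratio_def using False by (simp only:) (simp add: field_simps)
qed

lemma Pk_log_ratio_lower:
  assumes "h \<le> - h'" "h < 1" "h' < 1"
  shows "Pk_log_ratio h h' = 2 * ln ((1 - h) / (1 - h')) / (h' - h)"
  using Pk_log_ratio_upper[of "- h'" "- h"] Pk_log_ratio_minus[of h h'] assms by simp

lemma has_real_derivative_upper_antiderivative:
  assumes a: "0 \<le> a" "a \<le> 1" and h: "- a < h" "h < 1" "h \<noteq> a"
  shows "((\<lambda>h. - 2 * dilog ((a - h) / (1 + a))) has_real_derivative 2 * ln ((1 + h) / (1 + a)) / (h - a)) (at h)"
proof -
  define x where "x = (a - h) / (1 + a)"
  have "\<bar>x\<bar> < 1" "x \<noteq> 0" "1 - x = (1 + h) / (1 + a)"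
    using a h by (auto simp: x_def abs_less_iff field_simps)
  have inner: "((\<lambda>h. (a - h) / (1 + a)) has_real_derivative - 1 / (1 + a)) (at h)"
    by (intro DERIV_cdivide) (auto intro!: derivative_eq_intros)
  have "((\<lambda>h. - 2 * dilog ((a - h) / (1 + a))) has_real_derivative - 2 * (- ln (1 - x) / x * (- 1 / (1 + a)))) (at h)"
    using \<open>\<bar>x\<bar> < 1\<close> \<open>x \<noteq> 0\<close>
    by (intro DERIV_cmult dilog_has_real_derivative[OF inner]) (simp_all add: x_def)
  moreover have "- 2 * (- L / x * (- 1 / (1 + a))) = 2 * L / (h - a)" for L
  proof -
    have "- 2 * (- L / x * (- 1 / (1 + a))) = - 2 * L / (x * (1 + a))"
      by simp
    also have "\<dots> = - 2 * L / (a - h)"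
      using a by (simp add: x_def)
    also have "\<dots> = 2 * L / (h - a)"
      using h by (simp add: field_simps)
    finally show ?thesis .
  qed
  ultimately show ?thesis
    by (simp only: \<open>1 - x = (1 + h) / (1 + a)\<close>)
qed

lemma has_integral_log_ratio_upper:
  assumes a: "0 \<le> a" "a \<le> 1"
  shows "((\<lambda>h. 2 * ln ((1 + h) / (1 + a)) / (h - a)) has_integral
    2 * dilog (2 * a / (1 + a)) - 2 * dilog ((a - 1) / (1 + a))) {-a..1}"
proof -
  define \<Psi> where "\<Psi> = (\<lambda>h. - 2 * dilog ((a - h) / (1 + a)))"
  have "continuous_on {-a..1} \<Psi>"
    unfolding \<Psi>_def using a
    by (intro continuous_intros continuous_on_compose2[OF continuous_on_dilog]) (auto simp: field_simps)
  then have "((\<lambda>h. 2 * ln ((1 + h) / (1 + a)) / (h - a)) has_integral \<Psi> 1 - \<Psi> (- a)) {-a..1}"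
    using a has_real_derivative_upper_antiderivative[OF a]
    by (intro fundamental_theorem_of_calculus_interior_strong[of "{a}"])
       (auto simp: \<Psi>_def has_real_derivative_iff_has_vector_derivative[symmetric])
  then show ?thesis
    by (simp add: \<Psi>_def)
qed

lemma has_real_derivative_lower_antiderivative:
  assumes a: "0 \<le> a" "a < 1" and h: "- 1 < h" "h < - a"
  shows "((\<lambda>h. - (ln ((1 - h) / (1 - a)))\<^sup>2 - 2 * dilog ((a - h) / (1 - h)))
    has_real_derivative 2 * ln ((1 - h) / (1 - a)) / (a - h)) (at h)"
proof -
  define L where "L = ln ((1 - h) / (1 - a))"
  define x where "x = (a - h) / (1 - h)"
  have "\<bar>x\<bar> < 1" "x \<noteq> 0" "ln (1 - x) = - L"
  proof -
    show "\<bar>x\<bar> < 1" "x \<noteq> 0"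
      using a h by (auto simp: x_def abs_less_iff field_simps)
    have "1 - x = (1 - a) / (1 - h)"
      using a h by (simp add: x_def field_simps)
    then show "ln (1 - x) = - L"
      using a h by (simp add: L_def ln_div)
  qed
  have "((\<lambda>h. ln ((1 - h) / (1 - a))) has_real_derivative inverse ((1 - h) / (1 - a)) * (- 1 / (1 - a))) (at h)"
    using a h by (intro DERIV_chain2[OF DERIV_ln] DERIV_cdivide) (auto intro!: derivative_eq_intros)
  moreover have "inverse ((1 - h) / (1 - a)) * (- 1 / (1 - a)) = - 1 / (1 - h)"
    using a h by (simp add: field_simps)
  ultimately have "((\<lambda>h. ln ((1 - h) / (1 - a))) has_real_derivative - 1 / (1 - h)) (at h)"
    by simp
  from DERIV_power[OF this, of 2]
  have d1: "((\<lambda>h. (ln ((1 - h) / (1 - a)))\<^sup>2) has_real_derivative - 2 * L / (1 - h)) (at h)"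
    by (simp add: L_def)
  have inner: "((\<lambda>h. (a - h) / (1 - h)) has_real_derivative (a - 1) / (1 - h)\<^sup>2) (at h)"
    using a h by (auto intro!: derivative_eq_intros simp: field_simps power2_eq_square)
  have d2: "((\<lambda>h. dilog ((a - h) / (1 - h))) has_real_derivative
      - ln (1 - x) / x * ((a - 1) / (1 - h)\<^sup>2)) (at h)"
    using \<open>\<bar>x\<bar> < 1\<close> \<open>x \<noteq> 0\<close> by (intro dilog_has_real_derivative[OF inner]) (simp_all add: x_def)
  have "- (- 2 * L / u) - 2 * (L / (v / u) * ((v - u) / u\<^sup>2)) = 2 * L / v"
    if "u \<noteq> 0" "v \<noteq> 0" for u v
    using that by (simp add: field_simps power2_eq_square)
  from this[of "1 - h" "a - h"]
  have "- (- 2 * L / (1 - h)) - 2 * (L / x * ((a - 1) / (1 - h)\<^sup>2)) = 2 * L / (a - h)"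
    using a h by (simp add: x_def)
  then show ?thesis
    using DERIV_diff[OF DERIV_minus[OF d1] DERIV_cmult[OF d2, of 2]]
    unfolding \<open>ln (1 - x) = - L\<close> by (simp add: L_def)
qed

lemma has_integral_log_ratio_lower:
  assumes a: "0 \<le> a" "a < 1"
  shows "((\<lambda>h. 2 * ln ((1 - h) / (1 - a)) / (a - h)) has_integral
    (ln (2 / (1 - a)))\<^sup>2 + 2 * dilog ((1 + a) / 2) - (ln ((1 + a) / (1 - a)))\<^sup>2 - 2 * dilog (2 * a / (1 + a)))
    {-1..-a}"
proof -
  define \<Psi> where "\<Psi> = (\<lambda>h. - (ln ((1 - h) / (1 - a)))\<^sup>2 - 2 * dilog ((a - h) / (1 - h)))"
  have "continuous_on {-1..-a} \<Psi>"
    unfolding \<Psi>_def using a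
    by (intro continuous_intros continuous_on_compose2[OF continuous_on_dilog]) (auto simp: field_simps)
  then have "((\<lambda>h. 2 * ln ((1 - h) / (1 - a)) / (a - h)) has_integral \<Psi> (- a) - \<Psi> (- 1)) {-1..-a}"
    using a has_real_derivative_lower_antiderivative[OF a]
    by (intro fundamental_theorem_of_calculus_interior)
       (auto simp: \<Psi>_def has_real_derivative_iff_has_vector_derivative[symmetric])
  then show ?thesis
    by (simp add: \<Psi>_def algebra_simps)
qed

lemma Pk_log_ratio_has_integral_nonneg:
  assumes a: "0 \<le> a" "a \<le> 1"
  shows "((\<lambda>h. Pk_log_ratio h a) has_integral pi\<^sup>2 / 3) {-1..1}"
proof -
  have upper: "((\<lambda>h. Pk_log_ratio h a) has_integral
      2 * dilog (2 * a / (1 + a)) - 2 * dilog ((a - 1) / (1 + a))) {-a..1}"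
    by (rule has_integral_spike_finite[OF _ _ has_integral_log_ratio_upper[OF a], of "{-1}"])
       (use a in \<open>auto simp: Pk_log_ratio_upper\<close>)
  show ?thesis
  proof (cases "a = 1")
    case True
    then show ?thesis
      using upper by (simp add: dilog_1)
  next
    case False
    then have "a < 1"
      using a by simp
    have lower: "((\<lambda>h. Pk_log_ratio h a) has_integral
        (ln (2 / (1 - a)))\<^sup>2 + 2 * dilog ((1 + a) / 2) - (ln ((1 + a) / (1 - a)))\<^sup>2
        - 2 * dilog (2 * a / (1 + a))) {-1..-a}"
      by (rule has_integral_spike_finite[OF _ _ has_integral_log_ratio_lower[OF a(1) \<open>a < 1\<close>], of "{}"])
         (use a \<open>a < 1\<close> in \<open>auto simp: Pk_log_ratio_lower\<close>)
    have "- 1 \<le> - a" "- a \<le> 1"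
      using a by auto
    from has_integral_combine[OF this lower upper] show ?thesis
      by (rule has_integral_eq_rhs) (use dilog_Landen_reparametrized[OF a(1) \<open>a < 1\<close>] in linarith)
  qed
qed

lemma Pk_log_ratio_has_integral:
  assumes "- 1 \<le> a" "a \<le> 1"
  shows "((\<lambda>h. Pk_log_ratio h a) has_integral pi\<^sup>2 / 3) {-1..1}"
proof (cases "0 \<le> a")
  case False
  then have "((\<lambda>h. Pk_log_ratio (- h) (- a)) has_integral pi\<^sup>2 / 3) {-1..1}"
    using Pk_log_ratio_has_integral_nonneg[of "- a"] assms
      has_integral_reflect_real[where f = "\<lambda>h. Pk_log_ratio h (- a)" and a = "- 1" and b = 1]
    by simp
  then show ?thesis
    by (simp add: Pk_log_ratio_minus)
qed (use assms Pk_log_ratio_has_integral_nonneg in auto)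

lemma Pk_has_integral_S_h:
  assumes h': "- 1 \<le> h'" "h' \<le> 1"
  shows "((\<lambda>(S, h). Pk S h h') has_integral 1) ({0..} \<times> {-1..1})"
proof (rule has_integral_Times_iterated_nonneg)
  have "(\<lambda>(S, h). Pk S h h') \<in> borel_measurable (borel \<Otimes>\<^sub>M borel)"
    by measurable
  then show "(\<lambda>(S, h). Pk S h h') \<in> borel_measurable borel"
    by (simp add: borel_prod)
  show "0 \<le> (\<lambda>(S, h). Pk S h h') (S, h)" if "S \<in> {0..}" "h \<in> {-1..1}" for S h
    using that h' by (auto intro!: Pk_nonneg)
  show "0 \<le> 3 / pi\<^sup>2 * Pk_log_ratio h h'" if "h \<in> {-1..1}" for h
    using that h' Pk_log_ratio_nonneg[of h h'] by (simp add: abs_le_iff)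
  have "AE h in lborel. h \<noteq> h' \<and> h \<noteq> - 1 \<and> h \<noteq> 1"
    by (intro eventually_conj AE_lborel_singleton)
  then show "AE h in lborel. h \<in> {-1..1} \<longrightarrow>
      ((\<lambda>S. (\<lambda>(S, h). Pk S h h') (S, h)) has_integral 3 / pi\<^sup>2 * Pk_log_ratio h h') {0..}"
  proof eventually_elim
    case (elim h)
    then show ?case
      using h' Pk_has_integral_S[of h h'] by auto
  qed
  show "((\<lambda>h. 3 / pi\<^sup>2 * Pk_log_ratio h h') has_integral 1) {-1..1}"
    using has_integral_mult_right[OF Pk_log_ratio_has_integral[OF h'], of "3 / pi\<^sup>2"] by simp
qed auto

section \<open>Decay for large \<open>S\<close>\<close>

lemma Pk_le:
  assumes S: "4 \<le> S" and h: "\<bar>h\<bar> \<le> 1" "\<bar>h'\<bar> \<le> 1"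
  shows "Pk S h h' \<le> 6 / (pi\<^sup>2 * S) * (if Pk_lo h h' < 2 / S then 1 else 0)"
proof -
  define \<eta> where "\<eta> = Pk_eta h h'"
  define X where "X = pos_part (1 - Pk_lo h h' / 2 * S)"
  have "1 * 4 \<le> Pk_hi h h' * S"
    using S Pk_hi_ge_1[of h h'] by (intro mult_mono) auto
  then have "pos_part (1 - Pk_hi h h' / 2 * S) = 0"
    by (simp add: pos_part_def)
  then have Pk: "Pk S h h' = 3 / (pi\<^sup>2 * \<eta>) * (X / S)"
    using S h by (simp add: Pk_eq \<eta>_def X_def)
  show ?thesis
  proof (cases "Pk_lo h h' < 2 / S")
    case True
    have "0 \<le> \<eta>" "\<eta> \<le> 1" "1 - \<eta> \<le> Pk_lo h h'"
      using h Pk_lo_ge[of h h'] by (simp_all add: \<eta>_def Pk_eta_def)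
    then have "(1 - \<eta>) * 4 \<le> Pk_lo h h' * S"
      using S by (intro mult_mono) auto
    then have X: "X \<le> 2 * \<eta>"
      using \<open>0 \<le> \<eta>\<close> by (simp add: X_def pos_part_def)
    show ?thesis
    proof (cases "\<eta> = 0")
      case False
      have "3 / (pi\<^sup>2 * \<eta>) * (X / S) \<le> 3 / (pi\<^sup>2 * \<eta>) * (2 * \<eta> / S)"
        using X S \<open>0 \<le> \<eta>\<close> by (intro mult_left_mono divide_right_mono) auto
      also have "\<dots> = 6 / (pi\<^sup>2 * S)"
        using False by simp
      finally show ?thesis
        using True Pk by simp
    qed (use Pk S in simp)
  next
    case False
    then have "1 \<le> Pk_lo h h' / 2 * S"
      using S by (simp add: field_simps)
    then show ?thesis
      using False Pk by (simp add: X_def pos_part_def)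
  qed
qed

lemma Pk_lo_eq: "\<bar>h'\<bar> \<le> h \<Longrightarrow> Pk_lo h h' = 1 + h'"
  by (auto simp: Pk_lo_def abs_if field_simps split: if_splits)

lemma Pk_bounds_sector:
  assumes "4 \<le> S" "h \<le> 1" "\<bar>h'\<bar> \<le> h"
  shows "0 \<le> Pk S h h' \<and> Pk S h h' \<le> 6 / (pi\<^sup>2 * S) * (if 1 + h' < 2 / S then 1 else 0)"
proof -
  have "\<bar>h\<bar> \<le> 1" "\<bar>h'\<bar> \<le> 1"
    using assms by auto
  with Pk_le[OF assms(1) this] show ?thesis
    unfolding Pk_lo_eq[OF assms(3)] using assms by (simp add: Pk_nonneg)
qed

definition corner_squares :: "real \<Rightarrow> (real \<times> real) set" where
  "corner_squares t = {-1..t - 1} \<times> {1 - t..1} \<union> {1 - t..1} \<times> {-1..t - 1}"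

lemma corner_squares_sets [measurable]: "corner_squares t \<in> sets borel"
  by (auto simp: corner_squares_def intro!: borel_closed closed_Times)

lemma Pk_lo_less_imp_mem_corner_squares:
  assumes "\<bar>h\<bar> \<le> 1" "\<bar>h'\<bar> \<le> 1" "t \<le> 1" "Pk_lo h h' < t"
  shows "(h, h') \<in> corner_squares t"
  using assms by (auto simp: corner_squares_def Pk_lo_def abs_if field_simps split: if_splits)

lemma emeasure_lborel_Times_Icc:
  fixes a b c d :: real
  assumes "a \<le> b" "c \<le> d"
  shows "emeasure lborel ({a..b} \<times> {c..d}) = ennreal ((b - a) * (d - c))"
  using lborel.emeasure_pair_measure_Times[of "{a..b}" lborel "{c..d}"] assms
  by (simp add: lborel_prod ennreal_mult)

lemma emeasure_corner_squares_le:
  assumes "0 \<le> t"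
  shows "emeasure lborel (corner_squares t) \<le> ennreal (2 * t\<^sup>2)"
proof -
  have "emeasure lborel (corner_squares t)
      \<le> emeasure lborel ({-1..t - 1} \<times> {1 - t..1}) + emeasure lborel ({1 - t..1} \<times> {-1..t - 1 :: real})"
    unfolding corner_squares_def by (rule emeasure_subadditive) (auto intro!: borel_closed closed_Times)
  also have "\<dots> = ennreal (2 * t\<^sup>2)"
    using assms by (simp add: emeasure_lborel_Times_Icc ennreal_plus[symmetric] power2_eq_square del: ennreal_plus)
  finally show ?thesis .
qed

lemma Pk_le_indicator_corner_squares:
  assumes S: "4 \<le> S" and h: "\<bar>h\<bar> \<le> 1" "\<bar>h'\<bar> \<le> 1"
  shows "Pk S h h' \<le> 6 / (pi\<^sup>2 * S) * indicator (corner_squares (2 / S)) (h, h')"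
proof (cases "Pk_lo h h' < 2 / S")
  case True
  moreover have "2 / S \<le> 1"
    using S by simp
  ultimately show ?thesis
    using Pk_le[OF S h] Pk_lo_less_imp_mem_corner_squares[OF h] by simp
next
  case False
  then have "Pk S h h' \<le> 0"
    using Pk_le[OF S h] by simp
  moreover have "0 \<le> 6 / (pi\<^sup>2 * S) * indicator (corner_squares (2 / S)) (h, h')"
    using S by simp
  ultimately show ?thesis
    by linarith
qed

lemma integral_le_indicator_bound:
  fixes f :: "'a::euclidean_space \<Rightarrow> real"
  assumes [measurable]: "f \<in> borel_measurable borel" "D \<in> sets borel" "B \<in> sets borel"
    and nonneg: "\<And>x. x \<in> D \<Longrightarrow> 0 \<le> f x"
    and bound: "\<And>x. x \<in> D \<Longrightarrow> f x \<le> c * indicator B x"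
    and B: "emeasure lborel B \<le> ennreal b" and "0 \<le> c" "0 \<le> b"
  shows "f integrable_on D \<and> integral D f \<le> c * b"
proof -
  have "ennreal (indicator D x * f x) \<le> ennreal c * indicator B x" for x
  proof (cases "x \<in> D")
    case True
    then show ?thesis
      using nonneg[of x] bound[of x] by (cases "x \<in> B") (auto intro: ennreal_leI)
  qed simp
  then have "(\<integral>\<^sup>+x. ennreal (indicator D x * f x) \<partial>lborel) \<le> (\<integral>\<^sup>+x. ennreal c * indicator B x \<partial>lborel)"
    by (intro nn_integral_mono)
  also have "\<dots> = ennreal c * emeasure lborel B"
    by (rule nn_integral_cmult_indicator) simp
  also have "\<dots> \<le> ennreal c * ennreal b"
    by (rule mult_left_mono[OF B]) simp
  also have "\<dots> = ennreal (c * b)"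
    using \<open>0 \<le> c\<close> \<open>0 \<le> b\<close> by (simp add: ennreal_mult)
  finally have le: "(\<integral>\<^sup>+x. ennreal (indicator D x * f x) \<partial>lborel) \<le> ennreal (c * b)" .
  then obtain r where r: "(\<integral>\<^sup>+x. ennreal (indicator D x * f x) \<partial>lborel) = ennreal r" "0 \<le> r"
    by (cases "\<integral>\<^sup>+x. ennreal (indicator D x * f x) \<partial>lborel" rule: ennreal_cases) (auto simp: top_unique)
  have "(f has_integral r) D"
    using nonneg r by (intro has_integral_nn_integral_on) auto
  moreover have "r \<le> c * b"
    using le r \<open>0 \<le> c\<close> \<open>0 \<le> b\<close> by simp
  ultimately show ?thesis
    by (auto simp: has_integral_iff)
qed

lemma Pk_integral_le:
  assumes S: "4 \<le> S"
  shows "(\<lambda>(h, h'). Pk S h h') integrable_on ({-1..1} \<times> {-1..1})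
    \<and> integral ({-1..1} \<times> {-1..1}) (\<lambda>(h, h'). Pk S h h') \<le> 48 / (pi\<^sup>2 * S ^ 3)"
proof -
  have "(\<lambda>(h, h'). Pk S h h') \<in> borel_measurable (borel \<Otimes>\<^sub>M borel)"
    by measurable
  then have meas: "(\<lambda>(h, h'). Pk S h h') \<in> borel_measurable borel"
    by (simp add: borel_prod)
  have Q: "{-1..1 :: real} \<times> {-1..1 :: real} \<in> sets borel"
    by (auto intro!: borel_closed closed_Times)
  have nonneg: "0 \<le> (\<lambda>(h, h'). Pk S h h') x" if "x \<in> {-1..1} \<times> {-1..1}" for x
    using that S by (auto intro!: Pk_nonneg)
  have bound: "(\<lambda>(h, h'). Pk S h h') x \<le> 6 / (pi\<^sup>2 * S) * indicator (corner_squares (2 / S)) x"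
    if "x \<in> {-1..1} \<times> {-1..1}" for x
    using that Pk_le_indicator_corner_squares[OF S] by (auto simp: abs_le_iff)
  have "(\<lambda>(h, h'). Pk S h h') integrable_on ({-1..1} \<times> {-1..1})
    \<and> integral ({-1..1} \<times> {-1..1}) (\<lambda>(h, h'). Pk S h h') \<le> 6 / (pi\<^sup>2 * S) * (2 * (2 / S)\<^sup>2)"
    by (rule integral_le_indicator_bound[OF meas Q corner_squares_sets nonneg bound emeasure_corner_squares_le])
       (use S in auto)
  moreover have "6 / (pi\<^sup>2 * S) * (2 * (2 / S)\<^sup>2) = 48 / (pi\<^sup>2 * S ^ 3)"
    by (simp add: power2_eq_square power3_eq_cube)
  ultimately show ?thesis
    by simp
qed

theorem corollary2p2:
  shows "piecewise_continuous_on ({0..} \<times> {-1..1} \<times> {-1..1})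
           (\<lambda>(S, h, h'). Pk S h h')
    \<and> (\<forall>S\<ge>0. \<exists>N::(real \<times> real) set. negligible N \<and>
          (\<forall>h h'. h \<in> {-1..1} \<and> h' \<in> {-1..1} \<and> (h, h') \<notin> N \<longrightarrow>
             Pk S h h' = Pk S h' h \<and> Pk S h h' = Pk S (-h) (-h')))
    \<and> (\<forall>h'\<in>{-1..1}. ((\<lambda>(S, h). Pk S h h') has_integral 1) ({0..} \<times> {-1..1}))
    \<and> (\<forall>h\<in>{-1..1}. ((\<lambda>(S, h'). Pk S h h') has_integral 1) ({0..} \<times> {-1..1}))
    \<and> (\<forall>S\<ge>4. \<exists>N::(real \<times> real) set. negligible N \<and>
          (\<forall>h h'. h \<in> {-1<..<1} \<and> h' \<in> {-1<..<1} \<and> \<bar>h'\<bar> \<le> h \<and> (h, h') \<notin> N \<longrightarrow>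
             0 \<le> Pk S h h' \<and>
             Pk S h h' \<le> 6 / (pi^2 * S) * (if 1 + h' < 2 / S then 1 else 0)))
    \<and> (\<forall>S\<ge>4. (\<lambda>(h, h'). Pk S h h') integrable_on ({-1..1} \<times> {-1..1}) \<and>
          integral ({-1..1} \<times> {-1..1}) (\<lambda>(h, h'). Pk S h h') \<le> 48 / (pi^2 * S^3))"
proof (intro conjI allI ballI impI)
  show "piecewise_continuous_on ({0..} \<times> {-1..1} \<times> {-1..1}) (\<lambda>(S, h, h'). Pk S h h')"
    by (rule piecewise_continuous_on_Pk)
  show "\<exists>N::(real \<times> real) set. negligible N \<and>
      (\<forall>h h'. h \<in> {-1..1} \<and> h' \<in> {-1..1} \<and> (h, h') \<notin> N \<longrightarrow>
        Pk S h h' = Pk S h' h \<and> Pk S h h' = Pk S (-h) (-h'))" for S :: real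
    by (intro exI[of _ "{}"]) (simp add: Pk_commute Pk_minus)
  show "((\<lambda>(S, h). Pk S h h') has_integral 1) ({0..} \<times> {-1..1})" if "h' \<in> {-1..1}" for h'
    using that by (auto intro: Pk_has_integral_S_h)
  show "((\<lambda>(S, h'). Pk S h h') has_integral 1) ({0..} \<times> {-1..1})" if "h \<in> {-1..1}" for h
    using that Pk_has_integral_S_h[of h] by (simp add: Pk_commute[of _ h])
  show "\<exists>N::(real \<times> real) set. negligible N \<and>
      (\<forall>h h'. h \<in> {-1<..<1} \<and> h' \<in> {-1<..<1} \<and> \<bar>h'\<bar> \<le> h \<and> (h, h') \<notin> N \<longrightarrow>
        0 \<le> Pk S h h' \<and> Pk S h h' \<le> 6 / (pi^2 * S) * (if 1 + h' < 2 / S then 1 else 0))"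
    if "4 \<le> S" for S
    using Pk_bounds_sector[OF that] by (intro exI[of _ "{}"]) (auto simp del: if_split)
  show "(\<lambda>(h, h'). Pk S h h') integrable_on ({-1..1} \<times> {-1..1})"
    "integral ({-1..1} \<times> {-1..1}) (\<lambda>(h, h'). Pk S h h') \<le> 48 / (pi^2 * S^3)" if "4 \<le> S" for S
    using Pk_integral_le[OF that] by auto
qed

end
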